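(* Let $\mu_0=\rho_0(\theta)d\theta$ and $\mu_1=\rho_1(\theta)d\theta$ be probability measures on $\mathbb{S}^1$ in $\mathcal{M}^+_0$ with densities $\rho_0,\rho_1\in L^1(\mathbb{S}^1)$, and assume there is $c>0$ with $\rho_0(\theta)\ge c$ and $\rho_1(\theta)\ge c$ for a.e. $\theta\in\mathbb{S}^1$. Then $\overline{W}_2(\mu_0,\mu_1)<+\infty$.
   Context: $\mathbb{S}^1$ is identified with $[0,2\pi)$; $\mathcal{M}^+_0$ is the set of positive finite Radon measures $\mu$ on $\mathbb{S}^1$ with $\int e^{i\theta}d\mu(\theta)=0$. A pair $(\rho,m)$ of finite signed Radon measures on $[0,1]\times\mathbb{S}^1$ satisfies the continuity equation $\partial_t\rho+\partial_\theta m=0$ with boundary conditions $\rho_0=\mu_0$, $\rho_1=\mu_1$ if for all $\phi\in C^1([0,1]\times\mathbb{S}^1)$: $\int\partial_t\phi\,d\rho+\int\partial_\theta\phi\,dm=\int_{\mathbb{S}^1}\phi(1,\cdot)d\mu_1-\int_{\mathbb{S}^1}\phi(0,\cdot)d\mu_0$; then $\rho=\rho_t\otimes dt$ for measures $\rho_t$ on $\mathbb{S}^1$. Define $f(d,m)=\frac{|m|^2}{2d}$ if $d>0$, $f(0,0)=0$, $f=+\infty$ otherwise. For $\nu=(\rho,m)$, $\mathcal{A}(\nu)=\int_{[0,1]\times\mathbb{S}^1}f\big(\frac{d\nu}{d\lambda}\big)d\lambda$ for any measure $\lambda$ with $|\rho|,|m|\ll\lambda$. The constrained Wasserstein distance $\overline{W}_2(\mu_0,\mu_1)$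 is the infimum of $\mathcal{A}(\rho,m)$ over pairs satisfying the continuity equation with boundary conditions $\mu_0,\mu_1$ and $\int_{\mathbb{S}^1}e^{i\theta}d\rho_t(\theta)=0$ for a.e. $t\in[0,1]$. *)

theory Defs
  imports "HOL-Probability.Probability"
begin

text \<open>The circle S^1 is identified with [0,2 pi) inside the reals; the time-space
  cylinder [0,1] x S^1 with [0,1] x [0,2 pi) inside real x real.\<close>

definition circ :: "real set" where
  "circ = {0..<2*pi}"

definition cyl :: "(real \<times> real) set" where
  "cyl = {0..1} \<times> circ"

definition circle_measure :: "real measure \<Rightarrow> bool" where
  "circle_measure \<mu> \<longleftrightarrow> sets \<mu> = sets borel \<and> finite_measure \<mu> \<and>
     emeasure \<mu> (UNIV - circ) = 0"

definition M0plus :: "real measure \<Rightarrow> bool" where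
  "M0plus \<mu> \<longleftrightarrow> circle_measure \<mu> \<and> (LINT \<theta>|\<mu>. cis \<theta>) = 0"

text \<open>C^1 test functions on [0,1] x S^1, given as C^1 functions on R x R that are
  2 pi-periodic in the angular variable, with their (continuous) partial derivatives
  phit (in t) and phith (in theta).\<close>
definition C1_test ::
  "(real \<times> real \<Rightarrow> real) \<Rightarrow> (real \<times> real \<Rightarrow> real) \<Rightarrow> (real \<times> real \<Rightarrow> real) \<Rightarrow> bool" where
  "C1_test \<phi> \<phi>t \<phi>\<theta> \<longleftrightarrow>
     (\<forall>t \<theta>. \<phi> (t, \<theta> + 2*pi) = \<phi> (t, \<theta>)) \<and>
     continuous_on UNIV \<phi>t \<and> continuous_on UNIV \<phi>\<theta> \<and>
     (\<forall>t \<theta>. ((\<lambda>s. \<phi> (s, \<theta>)) has_real_derivative \<phi>t (t, \<theta>)) (at t)) \<and>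
     (\<forall>t \<theta>. ((\<lambda>s. \<phi> (t, s)) has_real_derivative \<phi>\<theta> (t, \<theta>)) (at \<theta>))"

text \<open>A pair nu = (rho, m) of finite signed Radon measures on [0,1] x S^1 is represented
  by a finite positive reference measure lam on the cylinder and densities d, v in
  L^1(lam): rho = d lam, m = v lam.  Every such pair arises this way (take
  lam = |rho| + |m|).\<close>
definition reference_measure :: "(real \<times> real) measure \<Rightarrow> bool" where
  "reference_measure lam \<longleftrightarrow> sets lam = sets borel \<and> finite_measure lam \<and>
     emeasure lam (UNIV - cyl) = 0"

definition continuity_eq ::
  "real measure \<Rightarrow> real measure \<Rightarrow> (real \<times> real) measure \<Rightarrow>
   (real \<times> real \<Rightarrow> real) \<Rightarrow> (real \<times> real \<Rightarrow> real) \<Rightarrow> bool" where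
  "continuity_eq \<mu>0 \<mu>1 lam d v \<longleftrightarrow>
     (\<forall>\<phi> \<phi>t \<phi>\<theta>. C1_test \<phi> \<phi>t \<phi>\<theta> \<longrightarrow>
        (LINT x|lam. \<phi>t x * d x) + (LINT x|lam. \<phi>\<theta> x * v x) =
        (LINT \<theta>|\<mu>1. \<phi> (1, \<theta>)) - (LINT \<theta>|\<mu>0. \<phi> (0, \<theta>)))"

text \<open>The constraint: int e^{i theta} d rho_t = 0 for a.e. t, expressed without the
  disintegration rho = rho_t (x) dt: for every Borel set A of times,
  int_{A x S^1} e^{i theta} d rho = 0.\<close>
definition moment_constraint ::
  "(real \<times> real) measure \<Rightarrow> (real \<times> real \<Rightarrow> real) \<Rightarrow> bool" where
  "moment_constraint lam d \<longleftrightarrow>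
     (\<forall>A \<in> sets (borel :: real measure).
        (LINT x|lam. complex_of_real (indicator A (fst x) * d x) * cis (snd x)) = 0)"

definition f_act :: "real \<Rightarrow> real \<Rightarrow> ennreal" where
  "f_act d m = (if d > 0 then ennreal (m\<^sup>2 / (2*d))
                else if d = 0 \<and> m = 0 then 0 else \<infinity>)"

definition action :: "(real \<times> real) measure \<Rightarrow> (real \<times> real \<Rightarrow> real) \<Rightarrow> (real \<times> real \<Rightarrow> real) \<Rightarrow> ennreal" where
  "action lam d v = (\<integral>\<^sup>+ x. f_act (d x) (v x) \<partial>lam)"

definition admissible ::
  "real measure \<Rightarrow> real measure \<Rightarrow> (real \<times> real) measure \<Rightarrow>
   (real \<times> real \<Rightarrow> real) \<Rightarrow> (real \<times> real \<Rightarrow> real) \<Rightarrow> bool" where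
  "admissible \<mu>0 \<mu>1 lam d v \<longleftrightarrow>
     reference_measure lam \<and> integrable lam d \<and> integrable lam v \<and>
     continuity_eq \<mu>0 \<mu>1 lam d v \<and> moment_constraint lam d"

definition constrained_W2 :: "real measure \<Rightarrow> real measure \<Rightarrow> ennreal" where
  "constrained_W2 \<mu>0 \<mu>1 = (INF p \<in> {(lam, d, v). admissible \<mu>0 \<mu>1 lam d v}.
      case p of (lam, d, v) \<Rightarrow> action lam d v)"

end

(* The linear interpolation rho_t = (1 - t) rho_0 + t rho_1, with the time-independent momentum
   m(theta) = - int_0^theta (rho_1 - rho_0), is an admissible path.  It solves the continuity
   equation since d/dtheta m = rho_0 - rho_1 = - d/dt rho_t, and m(0) = m(2 pi) = 0 because both
   measures have unit mass, so the angular integration by parts against periodic test functions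
   has no boundary term.  Its first Fourier mode is a convex combination of those of mu_0 and mu_1,
   hence vanishes.  Finally rho_t >= c and |m| <= K := ||rho_1 - rho_0||_1 bound the action by
   2 pi K^2 / (2 c). *)
theory Submission
  imports Defs
begin

lemma C1_test_continuous:
  assumes "C1_test \<phi> \<phi>t \<phi>\<theta>"
  shows "continuous_on UNIV \<phi>"
proof -
  have \<phi>\<theta>: "continuous_on UNIV \<phi>\<theta>"
    and deriv_t: "\<And>t \<theta>. ((\<lambda>s. \<phi> (s, \<theta>)) has_real_derivative \<phi>t (t, \<theta>)) (at t)"
    and deriv_\<theta>: "\<And>t \<theta>. ((\<lambda>s. \<phi> (t, s)) has_real_derivative \<phi>\<theta> (t, \<theta>)) (at \<theta>)"
    using assms unfolding C1_test_def by blast+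
  have "isCont \<phi> (t, \<theta>)" for t \<theta>
  proof -
    have "continuous_on UNIV (blinfun_mult_right \<circ> \<phi>\<theta>)"
      by (intro continuous_on_compose \<phi>\<theta> linear_continuous_on bounded_linear_blinfun_mult_right)
    then have cont: "continuous (at (t, \<theta>) within UNIV \<times> UNIV)
        (\<lambda>(x, y). blinfun_mult_right (\<phi>\<theta> (x, y)))"
      by (simp add: continuous_on_eq_continuous_at o_def case_prod_beta')
    have "((\<lambda>(x, y). \<phi> (x, y)) has_derivative (\<lambda>(dx, dy). \<phi>t (t, \<theta>) * dx + \<phi>\<theta> (t, \<theta>) * dy))
        (at (t, \<theta>) within UNIV \<times> UNIV)"
      by (rule has_derivative_partialsI[where fx="\<lambda>dx. \<phi>t (t, \<theta>) * dx"
          and fy="\<lambda>x y. blinfun_mult_right (\<phi>\<theta> (x, y))", simplified])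
        (use deriv_t[where t=t and \<theta>=\<theta>] deriv_\<theta> cont in \<open>auto simp: has_field_derivative_def\<close>)
    then have "\<phi> differentiable (at (t, \<theta>))"
      unfolding differentiable_def by (auto simp: case_prod_beta')
    then show ?thesis by (rule differentiable_imp_continuous_within)
  qed
  then show ?thesis by (auto intro: continuous_at_imp_continuous_on)
qed

lemma continuous_on_Pair_fst_section:
  "continuous_on UNIV f \<Longrightarrow> continuous_on UNIV (\<lambda>t. f (t, \<theta>))"
  by (rule continuous_on_compose2[of UNIV f]) (auto intro!: continuous_intros)

lemma continuous_on_Pair_snd_section:
  "continuous_on UNIV f \<Longrightarrow> continuous_on UNIV (\<lambda>\<theta>. f (t, \<theta>))"
  by (rule continuous_on_compose2[of UNIV f]) (auto intro!: continuous_intros)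

lemma borel_measurable_lborel_pair_continuous:
  fixes f :: "real \<times> real \<Rightarrow> real"
  assumes "continuous_on UNIV f"
  shows "f \<in> borel_measurable (lborel \<Otimes>\<^sub>M lborel)"
  using borel_measurable_continuous_onI[OF assms] by (simp add: lborel_prod)

lemma continuous_bounded_on_cyl:
  fixes f :: "real \<times> real \<Rightarrow> real"
  assumes "continuous_on UNIV f"
  obtains B where "\<And>t \<theta>. t \<in> {0..1} \<Longrightarrow> \<theta> \<in> circ \<Longrightarrow> \<bar>f (t, \<theta>)\<bar> \<le> B"
proof -
  have "compact (f ` ({0..1} \<times> {0..2*pi}))"
    by (intro compact_continuous_image continuous_on_subset[OF assms] compact_Times) auto
  then obtain B where "\<forall>x \<in> {0..1} \<times> {0..2*pi}. norm (f x) \<le> B"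
    by (meson bounded_iff compact_imp_bounded imageI)
  then show ?thesis by (intro that[of B]) (auto simp: circ_def)
qed

lemma continuous_bounded_on_circ:
  fixes f :: "real \<Rightarrow> real"
  assumes "continuous_on UNIV f"
  obtains B where "\<And>\<theta>. \<theta> \<in> circ \<Longrightarrow> \<bar>f \<theta>\<bar> \<le> B"
proof -
  have "compact (f ` {0..2*pi})"
    by (intro compact_continuous_image continuous_on_subset[OF assms]) auto
  then obtain B where "\<forall>x \<in> {0..2*pi}. norm (f x) \<le> B"
    by (meson bounded_iff compact_imp_bounded imageI)
  then show ?thesis by (intro that[of B]) (auto simp: circ_def)
qed

lemma sets_borel_circ [measurable]: "circ \<in> sets borel"
  by (simp add: circ_def)

lemma sets_lborel_pair: "sets (lborel \<Otimes>\<^sub>M lborel :: (real \<times> real) measure) = sets borel"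
  by (metis lborel_prod sets_lborel)

lemma sets_lborel_pair_cyl [measurable]: "cyl \<in> sets (lborel \<Otimes>\<^sub>M lborel)"
  unfolding cyl_def by (intro pair_measureI) auto

lemma emeasure_lborel_pair_cyl: "emeasure (lborel \<Otimes>\<^sub>M lborel) cyl = ennreal (2*pi)"
  unfolding cyl_def by (subst lborel.emeasure_pair_measure_Times) (auto simp: circ_def)

lemma indicator_cyl:
  "indicator cyl x = indicator {0..1} (fst x) * (indicator circ (snd x) :: real)"
  by (cases x) (auto simp: cyl_def indicator_def)

lemma integrable_lborel_pair_product:
  fixes f h :: "real \<Rightarrow> real"
  assumes "integrable lborel f" "integrable lborel h"
  shows "integrable (lborel \<Otimes>\<^sub>M lborel) (\<lambda>x. f (fst x) * h (snd x))"
proof -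
  have [measurable]: "f \<in> borel_measurable borel" "h \<in> borel_measurable borel"
    using assms by auto
  have "(\<integral>\<^sup>+ x. ennreal (norm (f (fst x) * h (snd x))) \<partial>(lborel \<Otimes>\<^sub>M lborel))
      = (\<integral>\<^sup>+ a. \<integral>\<^sup>+ b. ennreal (norm (f a)) * ennreal (norm (h b)) \<partial>lborel \<partial>lborel)"
    by (subst lborel.nn_integral_fst[symmetric]) (auto simp: abs_mult ennreal_mult)
  also have "\<dots> = (\<integral>\<^sup>+ a. ennreal (norm (f a)) \<partial>lborel) * (\<integral>\<^sup>+ b. ennreal (norm (h b)) \<partial>lborel)"
    by (simp add: nn_integral_cmult nn_integral_multc del: ennreal_mult')
  also have "\<dots> < \<infinity>"
    using assms by (auto simp: integrable_iff_bounded ennreal_mult_less_top)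
  finally show ?thesis by (auto simp: integrable_iff_bounded)
qed

lemma integrable_lborel_pair_bound:
  fixes F :: "real \<times> real \<Rightarrow> 'b::{banach, second_countable_topology}" and a b :: "real \<Rightarrow> real"
  assumes "integrable lborel a" "integrable lborel b"
    and "F \<in> borel_measurable (lborel \<Otimes>\<^sub>M lborel)"
    and "\<And>x y. norm (F (x, y)) \<le> a x * b y"
  shows "integrable (lborel \<Otimes>\<^sub>M lborel) F"
proof (rule Bochner_Integration.integrable_bound[where f="\<lambda>x. a (fst x) * b (snd x)"])
  show "integrable (lborel \<Otimes>\<^sub>M lborel) (\<lambda>x. a (fst x) * b (snd x))"
    using assms(1,2) by (rule integrable_lborel_pair_product)
  show "AE x in lborel \<Otimes>\<^sub>M lborel. norm (F x) \<le> norm (a (fst x) * b (snd x))"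
  proof (rule AE_I2)
    fix x :: "real \<times> real"
    have "norm (F x) \<le> a (fst x) * b (snd x)"
      using assms(4)[of "fst x" "snd x"] by (simp only: prod.collapse)
    then show "norm (F x) \<le> norm (a (fst x) * b (snd x))"
      unfolding real_norm_def by (rule order_trans) (rule abs_ge_self)
  qed
qed fact

lemma integrable_circ_supported_mult:
  fixes g h :: "real \<Rightarrow> real"
  assumes g: "integrable lborel g" "\<And>s. s \<notin> circ \<Longrightarrow> g s = 0" and h: "continuous_on UNIV h"
  shows "integrable lborel (\<lambda>s. g s * h s)"
proof -
  obtain B where B: "\<And>s. s \<in> circ \<Longrightarrow> \<bar>h s\<bar> \<le> B"
    using continuous_bounded_on_circ[OF h] by blast
  have "\<bar>g s * h s\<bar> \<le> \<bar>B * g s\<bar>" for s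
  proof (cases "s \<in> circ")
    case True
    then have "\<bar>g s\<bar> * \<bar>h s\<bar> \<le> \<bar>g s\<bar> * B"
      using B by (intro mult_left_mono) auto
    then show ?thesis
      using mult_right_mono[OF abs_ge_self[of B] abs_ge_zero[of "g s"]] by (simp add: abs_mult mult.commute)
  qed (simp add: g(2))
  then have bound: "AE s in lborel. norm (g s * h s) \<le> norm (B * g s)"
    by simp
  have "(\<lambda>s. g s * h s) \<in> borel_measurable lborel"
    using g(1) borel_measurable_continuous_onI[OF h] by simp
  from Bochner_Integration.integrable_bound[OF _ this bound] show ?thesis
    using g(1) by simp
qed

lemma integral_Icc_01_interpolation_by_parts:
  fixes h h' :: "real \<Rightarrow> real" and a b :: real
  assumes h: "\<And>t. (h has_real_derivative h' t) (at t)" and h': "continuous_on UNIV h'"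
  shows "(\<integral>t. indicator {0..1} t * (h' t * ((1 - t) * a + t * b)) \<partial>lborel)
       = b * h 1 - a * h 0 - (b - a) * (\<integral>t. indicator {0..1} t * h t \<partial>lborel)"
proof -
  have "(\<integral>t. (((1 - t) * a + t * b) * h' t) * indicator {0..1} t \<partial>lborel)
      = ((1 - 1) * a + 1 * b) * h 1 - ((1 - 0) * a + 0 * b) * h 0
        - (\<integral>t. ((b - a) * h t) * indicator {0..1} t \<partial>lborel)"
  proof (rule integral_by_parts)
    show "((\<lambda>t. (1 - t) * a + t * b) has_real_derivative b - a) (at t)" for t
      by (rule derivative_eq_intros refl)+ simp
  qed (use h h' in \<open>auto simp: continuous_on_eq_continuous_at\<close>)
  then show ?thesis
    unfolding mult.assoc integral_mult_right_zero by (simp add: ac_simps)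
qed

definition primitive :: "(real \<Rightarrow> real) \<Rightarrow> real \<Rightarrow> real" where
  "primitive g \<theta> = (\<integral>s. (if 0 \<le> s \<and> s \<le> \<theta> then g s else 0) \<partial>lborel)"

lemma borel_measurable_primitive:
  assumes [measurable]: "g \<in> borel_measurable borel"
  shows "primitive g \<in> borel_measurable borel"
  unfolding primitive_def by measurable

lemma abs_primitive_le:
  assumes "integrable lborel g"
  shows "\<bar>primitive g \<theta>\<bar> \<le> (\<integral>s. \<bar>g s\<bar> \<partial>lborel)"
proof -
  have cut_integrable: "integrable lborel (\<lambda>s. if 0 \<le> s \<and> s \<le> \<theta> then g s else 0)"
    using assms by (rule Bochner_Integration.integrable_bound) (use assms in auto)
  have "\<bar>primitive g \<theta>\<bar> \<le> (\<integral>s. norm (if 0 \<le> s \<and> s \<le> \<theta> then g s else 0) \<partial>lborel)"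
    unfolding primitive_def real_norm_def[symmetric] by (rule integral_norm_bound)
  also have "\<dots> \<le> (\<integral>s. \<bar>g s\<bar> \<partial>lborel)"
    using cut_integrable assms by (intro integral_mono) auto
  finally show ?thesis .
qed

lemma integral_derivative_mult_primitive:
  fixes \<psi> \<psi>' g :: "real \<Rightarrow> real"
  assumes \<psi>: "\<And>x. (\<psi> has_real_derivative \<psi>' x) (at x)" "continuous_on UNIV \<psi>'" "\<psi> (2*pi) = \<psi> 0"
    and g: "integrable lborel g" "\<And>s. s \<notin> circ \<Longrightarrow> g s = 0" "(\<integral>s. g s \<partial>lborel) = 0"
  shows "(\<integral>\<theta>. indicator circ \<theta> * \<psi>' \<theta> * primitive g \<theta> \<partial>lborel) = - (\<integral>s. g s * \<psi> s \<partial>lborel)"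
proof -
  have [measurable]: "g \<in> borel_measurable borel" "\<psi>' \<in> borel_measurable borel"
    using g(1) \<psi>(2) by (auto intro: borel_measurable_continuous_onI)
  have \<psi>_cont: "continuous_on UNIV \<psi>"
    using \<psi>(1) by (meson DERIV_isCont continuous_at_imp_continuous_on)
  obtain B where B: "\<And>\<theta>. \<theta> \<in> circ \<Longrightarrow> \<bar>\<psi>' \<theta>\<bar> \<le> B"
    using continuous_bounded_on_circ[OF \<psi>(2)] by blast
  define F where "F \<theta> s = indicator circ \<theta> * \<psi>' \<theta> * (if 0 \<le> s \<and> s \<le> \<theta> then g s else 0)"
    for \<theta> s :: real
  have "integrable (lborel \<Otimes>\<^sub>M lborel) (\<lambda>(\<theta>, s). F \<theta> s)"
  proof (rule integrable_lborel_pair_bound)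
    show "integrable lborel (\<lambda>\<theta>. B * indicator circ \<theta>)"
      by (simp add: circ_def)
    show "integrable lborel (\<lambda>s. \<bar>g s\<bar>)"
      using g(1) by simp
    show "(\<lambda>(\<theta>, s). F \<theta> s) \<in> borel_measurable (lborel \<Otimes>\<^sub>M lborel)"
      unfolding F_def by measurable
    show "norm ((\<lambda>(\<theta>, s). F \<theta> s) (\<theta>, s)) \<le> B * indicator circ \<theta> * \<bar>g s\<bar>" for \<theta> s
      using B[of \<theta>] by (auto simp: F_def abs_mult indicator_def intro!: mult_mono)
  qed
  then have Fubini: "(\<integral>s. (\<integral>\<theta>. F \<theta> s \<partial>lborel) \<partial>lborel) = (\<integral>\<theta>. (\<integral>s. F \<theta> s \<partial>lborel) \<partial>lborel)"
    by (rule lborel_pair.Fubini_integral)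
  have inner: "(\<integral>\<theta>. F \<theta> s \<partial>lborel) = \<psi> 0 * g s - g s * \<psi> s" for s
  proof (cases "s \<in> circ")
    case True
    then have s: "0 \<le> s" "s \<le> 2*pi"
      by (auto simp: circ_def)
    \<comment> \<open>the two integrands differ only at \<open>\<theta> = 2\<pi>\<close>\<close>
    have "AE \<theta> in lborel. F \<theta> s = g s * (\<psi>' \<theta> * indicator {s..2*pi} \<theta>)"
      using AE_lborel_singleton[of "2*pi"] by eventually_elim (use s in \<open>auto simp: F_def circ_def indicator_def\<close>)
    then have "(\<integral>\<theta>. F \<theta> s \<partial>lborel) = g s * (\<integral>\<theta>. \<psi>' \<theta> * indicator {s..2*pi} \<theta> \<partial>lborel)"
      by (subst integral_cong_AE[where g="\<lambda>\<theta>. g s * (\<psi>' \<theta> * indicator {s..2*pi} \<theta>)"])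
        (auto simp: F_def circ_def)
    also have "\<dots> = g s * (\<psi> (2*pi) - \<psi> s)"
      using s \<psi>(1,2) by (subst integral_FTC_Icc_real) (auto simp: continuous_on_eq_continuous_at)
    finally show ?thesis
      using \<psi>(3) by (simp add: algebra_simps)
  next
    case False
    then have "g s = 0" by (rule g(2))
    then show ?thesis
      unfolding F_def by (simp cong: if_cong)
  qed
  have "(\<integral>\<theta>. indicator circ \<theta> * \<psi>' \<theta> * primitive g \<theta> \<partial>lborel)
      = (\<integral>\<theta>. (\<integral>s. F \<theta> s \<partial>lborel) \<partial>lborel)"
    by (simp add: F_def primitive_def)
  also have "\<dots> = (\<integral>s. \<psi> 0 * g s - g s * \<psi> s \<partial>lborel)"
    using Fubini inner by simp
  also have "\<dots> = \<psi> 0 * (\<integral>s. g s \<partial>lborel) - (\<integral>s. g s * \<psi> s \<partial>lborel)"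
    using g(1,2) \<psi>_cont by (simp add: integrable_circ_supported_mult)
  finally show ?thesis
    using g(3) by simp
qed

definition time_integral :: "(real \<times> real \<Rightarrow> real) \<Rightarrow> real \<Rightarrow> real" where
  "time_integral \<phi> \<theta> = (\<integral>t. indicator {0..1} t * \<phi> (t, \<theta>) \<partial>lborel)"

lemma
  fixes g :: "real \<Rightarrow> real" and \<phi> :: "real \<times> real \<Rightarrow> real"
  assumes g: "integrable lborel g" "\<And>s. s \<notin> circ \<Longrightarrow> g s = 0" and \<phi>: "continuous_on UNIV \<phi>"
  shows integrable_mult_time_integral: "integrable lborel (\<lambda>s. g s * time_integral \<phi> s)"
    and integral_time_integral:
      "(\<integral>t. indicator {0..1} t * (\<integral>s. g s * \<phi> (t, s) \<partial>lborel) \<partial>lborel)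
       = (\<integral>s. g s * time_integral \<phi> s \<partial>lborel)"
proof -
  have [measurable]: "g \<in> borel_measurable borel" "\<phi> \<in> borel_measurable (lborel \<Otimes>\<^sub>M lborel)"
    using g(1) borel_measurable_lborel_pair_continuous[OF \<phi>] by auto
  obtain B where B: "\<And>t \<theta>. t \<in> {0..1} \<Longrightarrow> \<theta> \<in> circ \<Longrightarrow> \<bar>\<phi> (t, \<theta>)\<bar> \<le> B"
    using continuous_bounded_on_cyl[OF \<phi>] by blast
  define F where "F t s = indicator {0..1} t * (g s * \<phi> (t, s))" for t s :: real
  have F_inner: "(\<integral>t. F t s \<partial>lborel) = g s * time_integral \<phi> s" for s
    by (simp add: F_def time_integral_def mult.left_commute)
  have F: "integrable (lborel \<Otimes>\<^sub>M lborel) (\<lambda>(t, s). F t s)"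
  proof (rule integrable_lborel_pair_bound)
    show "integrable lborel (\<lambda>t::real. B * indicator {0..1} t)" "integrable lborel (\<lambda>s. \<bar>g s\<bar>)"
      using g(1) by auto
    show "(\<lambda>(t, s). F t s) \<in> borel_measurable (lborel \<Otimes>\<^sub>M lborel)"
      unfolding F_def by measurable
    show "norm ((\<lambda>(t, s). F t s) (t, s)) \<le> B * indicator {0..1} t * \<bar>g s\<bar>" for t s
      using mult_left_mono[OF B[of t s] abs_ge_zero[of "g s"]] g(2)[of s]
      by (cases "s \<in> circ") (auto simp: F_def abs_mult indicator_def mult.commute)
  qed
  show "integrable lborel (\<lambda>s. g s * time_integral \<phi> s)"
    using lborel_pair.integrable_snd[OF F] by (simp add: F_inner)
  have "(\<integral>t. indicator {0..1} t * (\<integral>s. g s * \<phi> (t, s) \<partial>lborel) \<partial>lborel)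
      = (\<integral>t. (\<integral>s. F t s \<partial>lborel) \<partial>lborel)"
    by (simp add: F_def)
  also have "\<dots> = (\<integral>s. (\<integral>t. F t s \<partial>lborel) \<partial>lborel)"
    using lborel_pair.Fubini_integral[OF F] by simp
  finally show "(\<integral>t. indicator {0..1} t * (\<integral>s. g s * \<phi> (t, s) \<partial>lborel) \<partial>lborel)
      = (\<integral>s. g s * time_integral \<phi> s \<partial>lborel)"
    by (simp add: F_inner)
qed

definition linear_interpolation :: "(real \<Rightarrow> real) \<Rightarrow> (real \<Rightarrow> real) \<Rightarrow> real \<times> real \<Rightarrow> real" where
  "linear_interpolation r0 r1 x = (1 - fst x) * r0 (snd x) + fst x * r1 (snd x)"

text \<open>The momentum solving \<open>\<partial>\<^sub>\<theta> m = -\<partial>\<^sub>t \<rho>\<^sub>t = r0 - r1\<close>; it does not depend on time.\<close>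
definition interpolation_flux :: "(real \<Rightarrow> real) \<Rightarrow> (real \<Rightarrow> real) \<Rightarrow> real \<times> real \<Rightarrow> real" where
  "interpolation_flux r0 r1 x = - primitive (\<lambda>s. r1 s - r0 s) (snd x)"

lemma borel_measurable_linear_interpolation:
  assumes [measurable]: "r0 \<in> borel_measurable borel" "r1 \<in> borel_measurable borel"
  shows "linear_interpolation r0 r1 \<in> borel_measurable (lborel \<Otimes>\<^sub>M lborel)"
  unfolding linear_interpolation_def by measurable

lemma borel_measurable_interpolation_flux:
  assumes "r0 \<in> borel_measurable borel" "r1 \<in> borel_measurable borel"
  shows "interpolation_flux r0 r1 \<in> borel_measurable (lborel \<Otimes>\<^sub>M lborel)"
proof -
  have [measurable]: "primitive (\<lambda>s. r1 s - r0 s) \<in> borel_measurable borel"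
    using assms by (intro borel_measurable_primitive) auto
  show ?thesis
    unfolding interpolation_flux_def by measurable
qed

lemma abs_linear_interpolation_le:
  assumes "t \<in> {0..1}"
  shows "\<bar>linear_interpolation r0 r1 (t, \<theta>)\<bar> \<le> \<bar>r0 \<theta>\<bar> + \<bar>r1 \<theta>\<bar>"
proof -
  have "(1 - t) * \<bar>r0 \<theta>\<bar> \<le> \<bar>r0 \<theta>\<bar>" "t * \<bar>r1 \<theta>\<bar> \<le> \<bar>r1 \<theta>\<bar>"
    using assms by (auto intro: mult_left_le_one_le)
  then show ?thesis
    using assms abs_triangle_ineq[of "(1 - t) * r0 \<theta>" "t * r1 \<theta>"]
    by (simp add: linear_interpolation_def abs_mult)
qed

lemma abs_interpolation_flux_le:
  assumes "integrable lborel r0" "integrable lborel r1"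
  shows "\<bar>interpolation_flux r0 r1 x\<bar> \<le> (\<integral>s. \<bar>r1 s - r0 s\<bar> \<partial>lborel)"
  unfolding interpolation_flux_def using assms by (simp add: abs_primitive_le)

lemma linear_interpolation_ge:
  assumes "t \<in> {0..1}" "c \<le> r0 \<theta>" "c \<le> r1 \<theta>"
  shows "c \<le> linear_interpolation r0 r1 (t, \<theta>)"
proof -
  have "(1 - t) * c \<le> (1 - t) * r0 \<theta>" "t * c \<le> t * r1 \<theta>"
    using assms by (auto intro: mult_left_mono)
  then show ?thesis
    by (simp add: linear_interpolation_def algebra_simps)
qed

lemma f_act_le:
  assumes "0 < c" "c \<le> d" "\<bar>m\<bar> \<le> K"
  shows "f_act d m \<le> ennreal (K\<^sup>2 / (2 * c))"
proof -
  have "m\<^sup>2 \<le> K\<^sup>2"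
    using assms(3) by (metis abs_ge_zero order_trans power2_abs power_mono)
  then have "m\<^sup>2 / (2 * d) \<le> K\<^sup>2 / (2 * c)"
    using assms(1,2) by (intro frac_le) auto
  then show ?thesis
    using assms(1,2) by (simp add: f_act_def ennreal_leI)
qed

lemma integral_time_term:
  fixes r0 r1 :: "real \<Rightarrow> real"
  assumes r: "integrable lborel r0" "integrable lborel r1"
    "\<And>s. s \<notin> circ \<Longrightarrow> r0 s = 0" "\<And>s. s \<notin> circ \<Longrightarrow> r1 s = 0"
    and \<phi>: "C1_test \<phi> \<phi>t \<phi>\<theta>"
  shows "(\<integral>x. indicator cyl x * (\<phi>t x * linear_interpolation r0 r1 x) \<partial>(lborel \<Otimes>\<^sub>M lborel))
       = (\<integral>\<theta>. r1 \<theta> * \<phi> (1, \<theta>) - r0 \<theta> * \<phi> (0, \<theta>) - (r1 \<theta> - r0 \<theta>) * time_integral \<phi> \<theta> \<partial>lborel)"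
proof -
  have \<phi>t: "continuous_on UNIV \<phi>t"
    and \<phi>_deriv: "\<And>t \<theta>. ((\<lambda>s. \<phi> (s, \<theta>)) has_real_derivative \<phi>t (t, \<theta>)) (at t)"
    using \<phi> unfolding C1_test_def by blast+
  have [measurable]: "r0 \<in> borel_measurable borel" "r1 \<in> borel_measurable borel"
    "\<phi>t \<in> borel_measurable (lborel \<Otimes>\<^sub>M lborel)"
    using r(1,2) borel_measurable_lborel_pair_continuous[OF \<phi>t] by auto
  obtain B where B: "\<And>t \<theta>. t \<in> {0..1} \<Longrightarrow> \<theta> \<in> circ \<Longrightarrow> \<bar>\<phi>t (t, \<theta>)\<bar> \<le> B"
    using continuous_bounded_on_cyl[OF \<phi>t] by blast
  define F where "F t \<theta> = indicator {0..1} t * (\<phi>t (t, \<theta>) * linear_interpolation r0 r1 (t, \<theta>))"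
    for t \<theta> :: real
  have F: "integrable (lborel \<Otimes>\<^sub>M lborel) (\<lambda>(t, \<theta>). F t \<theta>)"
  proof (rule integrable_lborel_pair_bound)
    show "integrable lborel (\<lambda>t::real. B * indicator {0..1} t)"
      "integrable lborel (\<lambda>\<theta>. \<bar>r0 \<theta>\<bar> + \<bar>r1 \<theta>\<bar>)"
      using r(1,2) by auto
    show "(\<lambda>(t, \<theta>). F t \<theta>) \<in> borel_measurable (lborel \<Otimes>\<^sub>M lborel)"
      unfolding F_def using borel_measurable_linear_interpolation by measurable
    show "norm ((\<lambda>(t, \<theta>). F t \<theta>) (t, \<theta>)) \<le> B * indicator {0..1} t * (\<bar>r0 \<theta>\<bar> + \<bar>r1 \<theta>\<bar>)" for t \<theta>
    proof (cases "t \<in> {0..1} \<and> \<theta> \<in> circ")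
      case True
      then show ?thesis
        using B[of t \<theta>] abs_linear_interpolation_le[of t r0 r1 \<theta>]
        by (auto simp: F_def abs_mult intro: mult_mono)
    qed (auto simp: F_def linear_interpolation_def r(3,4))
  qed
  have inner: "(\<integral>t. F t \<theta> \<partial>lborel)
      = r1 \<theta> * \<phi> (1, \<theta>) - r0 \<theta> * \<phi> (0, \<theta>) - (r1 \<theta> - r0 \<theta>) * time_integral \<phi> \<theta>" for \<theta>
    unfolding F_def time_integral_def linear_interpolation_def fst_conv snd_conv
    by (rule integral_Icc_01_interpolation_by_parts[OF \<phi>_deriv continuous_on_Pair_fst_section[OF \<phi>t]])
  have "indicator cyl x * (\<phi>t x * linear_interpolation r0 r1 x) = (\<lambda>(t, \<theta>). F t \<theta>) x" for x
  proof (cases x)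
    case (Pair t \<theta>)
    then show ?thesis
      by (cases "\<theta> \<in> circ") (auto simp: F_def linear_interpolation_def indicator_def cyl_def r(3,4))
  qed
  then have "(\<integral>x. indicator cyl x * (\<phi>t x * linear_interpolation r0 r1 x) \<partial>(lborel \<Otimes>\<^sub>M lborel))
      = (\<integral>x. (\<lambda>(t, \<theta>). F t \<theta>) x \<partial>(lborel \<Otimes>\<^sub>M lborel))"
    by simp
  also have "\<dots> = (\<integral>\<theta>. (\<integral>t. F t \<theta> \<partial>lborel) \<partial>lborel)"
    using lborel_pair.integral_snd[OF F] by simp
  finally show ?thesis
    by (simp only: inner)
qed

lemma integral_flux_term:
  fixes g :: "real \<Rightarrow> real"
  assumes g: "integrable lborel g" "\<And>s. s \<notin> circ \<Longrightarrow> g s = 0" "(\<integral>s. g s \<partial>lborel) = 0"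
    and \<phi>: "C1_test \<phi> \<phi>t \<phi>\<theta>"
  shows "(\<integral>x. indicator cyl x * (\<phi>\<theta> x * - primitive g (snd x)) \<partial>(lborel \<Otimes>\<^sub>M lborel))
       = (\<integral>s. g s * time_integral \<phi> s \<partial>lborel)"
proof -
  have \<phi>\<theta>: "continuous_on UNIV \<phi>\<theta>"
    and \<phi>_periodic: "\<And>t \<theta>. \<phi> (t, \<theta> + 2*pi) = \<phi> (t, \<theta>)"
    and \<phi>_deriv: "\<And>t \<theta>. ((\<lambda>s. \<phi> (t, s)) has_real_derivative \<phi>\<theta> (t, \<theta>)) (at \<theta>)"
    using \<phi> unfolding C1_test_def by blast+
  have [measurable]: "g \<in> borel_measurable borel" "primitive g \<in> borel_measurable borel"
    "\<phi>\<theta> \<in> borel_measurable (lborel \<Otimes>\<^sub>M lborel)"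
    using g(1) borel_measurable_primitive borel_measurable_lborel_pair_continuous[OF \<phi>\<theta>] by auto
  obtain B where B: "\<And>t \<theta>. t \<in> {0..1} \<Longrightarrow> \<theta> \<in> circ \<Longrightarrow> \<bar>\<phi>\<theta> (t, \<theta>)\<bar> \<le> B"
    using continuous_bounded_on_cyl[OF \<phi>\<theta>] by blast
  define K where "K = (\<integral>s. \<bar>g s\<bar> \<partial>lborel)"
  define F where "F t \<theta> = indicator {0..1} t * indicator circ \<theta> * (\<phi>\<theta> (t, \<theta>) * - primitive g \<theta>)"
    for t \<theta> :: real
  have F: "integrable (lborel \<Otimes>\<^sub>M lborel) (\<lambda>(t, \<theta>). F t \<theta>)"
  proof (rule integrable_lborel_pair_bound)
    show "integrable lborel (\<lambda>t::real. B * K * indicator {0..1} t)"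
      "integrable lborel (indicator circ :: real \<Rightarrow> real)"
      by (auto simp: circ_def)
    show "(\<lambda>(t, \<theta>). F t \<theta>) \<in> borel_measurable (lborel \<Otimes>\<^sub>M lborel)"
      unfolding F_def by measurable
    show "norm ((\<lambda>(t, \<theta>). F t \<theta>) (t, \<theta>)) \<le> B * K * indicator {0..1} t * indicator circ \<theta>" for t \<theta>
    proof (cases "t \<in> {0..1} \<and> \<theta> \<in> circ")
      case True
      then have "\<bar>\<phi>\<theta> (t, \<theta>)\<bar> * \<bar>primitive g \<theta>\<bar> \<le> B * K"
        using B[of t \<theta>] abs_primitive_le[OF g(1)] unfolding K_def by (intro mult_mono) auto
      then show ?thesis
        using True by (simp add: F_def abs_mult)
    qed (auto simp: F_def)
  qed
  have inner: "(\<integral>\<theta>. F t \<theta> \<partial>lborel) = indicator {0..1} t * (\<integral>s. g s * \<phi> (t, s) \<partial>lborel)" for t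
  proof -
    have "F t \<theta> = (- indicator {0..1} t) * (indicator circ \<theta> * \<phi>\<theta> (t, \<theta>) * primitive g \<theta>)" for \<theta>
      by (simp add: F_def)
    then have "(\<integral>\<theta>. F t \<theta> \<partial>lborel)
        = (- indicator {0..1} t) * (\<integral>\<theta>. indicator circ \<theta> * \<phi>\<theta> (t, \<theta>) * primitive g \<theta> \<partial>lborel)"
      by (simp only: integral_mult_right_zero)
    also have "(\<integral>\<theta>. indicator circ \<theta> * \<phi>\<theta> (t, \<theta>) * primitive g \<theta> \<partial>lborel)
        = - (\<integral>s. g s * \<phi> (t, s) \<partial>lborel)"
      using \<phi>_periodic[of t 0]
      by (intro integral_derivative_mult_primitive \<phi>_deriv g continuous_on_Pair_snd_section[OF \<phi>\<theta>]) simp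
    finally show ?thesis
      by simp
  qed
  have "indicator cyl x * (\<phi>\<theta> x * - primitive g (snd x)) = (\<lambda>(t, \<theta>). F t \<theta>) x" for x
    by (cases x) (simp add: F_def indicator_cyl)
  then have "(\<integral>x. indicator cyl x * (\<phi>\<theta> x * - primitive g (snd x)) \<partial>(lborel \<Otimes>\<^sub>M lborel))
      = (\<integral>x. (\<lambda>(t, \<theta>). F t \<theta>) x \<partial>(lborel \<Otimes>\<^sub>M lborel))"
    by simp
  also have "\<dots> = (\<integral>t. (\<integral>\<theta>. F t \<theta> \<partial>lborel) \<partial>lborel)"
    using lborel_pair.integral_fst[OF F] by simp
  also have "\<dots> = (\<integral>s. g s * time_integral \<phi> s \<partial>lborel)"
    unfolding inner using g(1,2) C1_test_continuous[OF \<phi>] by (rule integral_time_integral)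
  finally show ?thesis .
qed

definition cyl_lebesgue :: "(real \<times> real) measure" where
  "cyl_lebesgue = density (lborel \<Otimes>\<^sub>M lborel) (\<lambda>x. ennreal (indicator cyl x))"

lemma emeasure_cyl_lebesgue:
  assumes "A \<in> sets borel"
  shows "emeasure cyl_lebesgue A = emeasure (lborel \<Otimes>\<^sub>M lborel) (cyl \<inter> A)"
proof -
  have A: "A \<in> sets (lborel \<Otimes>\<^sub>M lborel)"
    using assms by (simp only: sets_lborel_pair)
  then have "emeasure cyl_lebesgue A = (\<integral>\<^sup>+ x. indicator (cyl \<inter> A) x \<partial>(lborel \<Otimes>\<^sub>M lborel))"
    unfolding cyl_lebesgue_def
    by (subst emeasure_density) (auto intro!: nn_integral_cong simp: indicator_def)
  also have "\<dots> = emeasure (lborel \<Otimes>\<^sub>M lborel) (cyl \<inter> A)"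
    using A by (intro nn_integral_indicator sets.Int sets_lborel_pair_cyl)
  finally show ?thesis .
qed

lemma reference_measure_cyl_lebesgue: "reference_measure cyl_lebesgue"
proof -
  have "space cyl_lebesgue = UNIV"
    by (simp add: cyl_lebesgue_def space_pair_measure)
  then have "finite_measure cyl_lebesgue"
    using emeasure_cyl_lebesgue[of UNIV] emeasure_lborel_pair_cyl by (intro finite_measureI) simp
  moreover have "cyl \<in> sets borel"
    using sets_lborel_pair_cyl by (simp only: sets_lborel_pair)
  then have "UNIV - cyl \<in> sets borel"
    by auto
  moreover have "sets cyl_lebesgue = sets borel"
    unfolding cyl_lebesgue_def sets_density by (rule sets_lborel_pair)
  ultimately show ?thesis
    unfolding reference_measure_def using emeasure_cyl_lebesgue[of "UNIV - cyl"] by simp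
qed

lemma
  fixes h :: "real \<times> real \<Rightarrow> 'b::{banach, second_countable_topology}"
  assumes "h \<in> borel_measurable (lborel \<Otimes>\<^sub>M lborel)"
  shows integral_cyl_lebesgue:
      "(\<integral>x. h x \<partial>cyl_lebesgue) = (\<integral>x. indicator cyl x *\<^sub>R h x \<partial>(lborel \<Otimes>\<^sub>M lborel))"
    and integrable_cyl_lebesgue_iff:
      "integrable cyl_lebesgue h \<longleftrightarrow> integrable (lborel \<Otimes>\<^sub>M lborel) (\<lambda>x. indicator cyl x *\<^sub>R h x)"
  unfolding cyl_lebesgue_def
  by (rule integral_density integrable_density; use assms in simp)+

lemma integrable_linear_interpolation:
  assumes "integrable lborel r0" "integrable lborel r1"
  shows "integrable cyl_lebesgue (linear_interpolation r0 r1)"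
proof -
  have [measurable]: "r0 \<in> borel_measurable borel" "r1 \<in> borel_measurable borel"
    using assms by auto
  have "integrable (lborel \<Otimes>\<^sub>M lborel) (\<lambda>x. indicator cyl x * linear_interpolation r0 r1 x)"
  proof (rule integrable_lborel_pair_bound)
    show "integrable lborel (indicator {0..1} :: real \<Rightarrow> real)"
      "integrable lborel (\<lambda>\<theta>. \<bar>r0 \<theta>\<bar> + \<bar>r1 \<theta>\<bar>)"
      using assms by auto
    show "(\<lambda>x. indicator cyl x * linear_interpolation r0 r1 x) \<in> borel_measurable (lborel \<Otimes>\<^sub>M lborel)"
      using borel_measurable_linear_interpolation by measurable
    show "norm (indicator cyl (t, \<theta>) * linear_interpolation r0 r1 (t, \<theta>))
        \<le> indicator {0..1} t * (\<bar>r0 \<theta>\<bar> + \<bar>r1 \<theta>\<bar>)" for t \<theta>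
      using abs_linear_interpolation_le[of t r0 r1 \<theta>]
      by (auto simp: indicator_def cyl_def abs_mult)
  qed
  then show ?thesis
    by (simp add: integrable_cyl_lebesgue_iff borel_measurable_linear_interpolation)
qed

lemma integrable_interpolation_flux:
  assumes "integrable lborel r0" "integrable lborel r1"
  shows "integrable cyl_lebesgue (interpolation_flux r0 r1)"
proof -
  have [measurable]: "interpolation_flux r0 r1 \<in> borel_measurable (lborel \<Otimes>\<^sub>M lborel)"
    using assms by (intro borel_measurable_interpolation_flux) auto
  define K where "K = (\<integral>s. \<bar>r1 s - r0 s\<bar> \<partial>lborel)"
  have "integrable (lborel \<Otimes>\<^sub>M lborel) (\<lambda>x. indicator cyl x * interpolation_flux r0 r1 x)"
  proof (rule integrable_lborel_pair_bound)
    show "integrable lborel (\<lambda>t::real. K * indicator {0..1} t)"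
      "integrable lborel (indicator circ :: real \<Rightarrow> real)"
      by (auto simp: circ_def)
    show "(\<lambda>x. indicator cyl x * interpolation_flux r0 r1 x) \<in> borel_measurable (lborel \<Otimes>\<^sub>M lborel)"
      by measurable
    show "norm (indicator cyl (t, \<theta>) * interpolation_flux r0 r1 (t, \<theta>))
        \<le> K * indicator {0..1} t * indicator circ \<theta>" for t \<theta>
      using abs_interpolation_flux_le[OF assms, of "(t, \<theta>)"]
      by (auto simp: indicator_def cyl_def abs_mult K_def)
  qed
  then show ?thesis
    by (simp add: integrable_cyl_lebesgue_iff)
qed

lemma continuity_eq_linear_interpolation:
  fixes r0 r1 :: "real \<Rightarrow> real"
  assumes r: "integrable lborel r0" "integrable lborel r1"
    "\<And>s. s \<notin> circ \<Longrightarrow> r0 s = 0" "\<And>s. s \<notin> circ \<Longrightarrow> r1 s = 0"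
    and nonneg: "AE \<theta> in lborel. 0 \<le> r0 \<theta>" "AE \<theta> in lborel. 0 \<le> r1 \<theta>"
    and mass: "(\<integral>\<theta>. r0 \<theta> \<partial>lborel) = (\<integral>\<theta>. r1 \<theta> \<partial>lborel)"
  shows "continuity_eq (density lborel (\<lambda>\<theta>. ennreal (r0 \<theta>))) (density lborel (\<lambda>\<theta>. ennreal (r1 \<theta>)))
    cyl_lebesgue (linear_interpolation r0 r1) (interpolation_flux r0 r1)"
  unfolding continuity_eq_def
proof (intro allI impI)
  fix \<phi> \<phi>t \<phi>\<theta> :: "real \<times> real \<Rightarrow> real"
  assume \<phi>: "C1_test \<phi> \<phi>t \<phi>\<theta>"
  then have \<phi>_cont: "continuous_on UNIV \<phi>"
    by (rule C1_test_continuous)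
  have [measurable]: "r0 \<in> borel_measurable borel" "r1 \<in> borel_measurable borel"
    "\<phi>t \<in> borel_measurable (lborel \<Otimes>\<^sub>M lborel)" "\<phi>\<theta> \<in> borel_measurable (lborel \<Otimes>\<^sub>M lborel)"
    "linear_interpolation r0 r1 \<in> borel_measurable (lborel \<Otimes>\<^sub>M lborel)"
    "interpolation_flux r0 r1 \<in> borel_measurable (lborel \<Otimes>\<^sub>M lborel)"
    using r(1,2) \<phi> borel_measurable_lborel_pair_continuous
      borel_measurable_linear_interpolation borel_measurable_interpolation_flux
    by (auto simp: C1_test_def)
  define g where "g s = r1 s - r0 s" for s
  have g: "integrable lborel g" "\<And>s. s \<notin> circ \<Longrightarrow> g s = 0" "(\<integral>s. g s \<partial>lborel) = 0"
    using r mass by (auto simp: g_def[abs_def])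
  have boundary: "(\<integral>\<theta>. \<phi> (i, \<theta>) \<partial>density lborel (\<lambda>\<theta>. ennreal (r \<theta>))) = (\<integral>\<theta>. r \<theta> * \<phi> (i, \<theta>) \<partial>lborel)"
    if "r \<in> borel_measurable borel" "AE \<theta> in lborel. 0 \<le> r \<theta>" for r and i :: real
    using that borel_measurable_continuous_onI[OF continuous_on_Pair_snd_section[OF \<phi>_cont]]
    by (subst integral_density) auto
  have flux_measurable: "(\<lambda>x. \<phi>\<theta> x * interpolation_flux r0 r1 x) \<in> borel_measurable (lborel \<Otimes>\<^sub>M lborel)"
    by measurable
  have "(\<integral>x. \<phi>t x * linear_interpolation r0 r1 x \<partial>cyl_lebesgue)
      = (\<integral>\<theta>. r1 \<theta> * \<phi> (1, \<theta>) - r0 \<theta> * \<phi> (0, \<theta>) - g \<theta> * time_integral \<phi> \<theta> \<partial>lborel)"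
    using integral_time_term[OF r \<phi>] by (simp add: integral_cyl_lebesgue g_def)
  also have "\<dots> = (\<integral>\<theta>. r1 \<theta> * \<phi> (1, \<theta>) \<partial>lborel) - (\<integral>\<theta>. r0 \<theta> * \<phi> (0, \<theta>) \<partial>lborel)
      - (\<integral>\<theta>. g \<theta> * time_integral \<phi> \<theta> \<partial>lborel)"
    using r(1-4) g(1,2) \<phi>_cont
    by (simp add: integrable_circ_supported_mult continuous_on_Pair_snd_section
        integrable_mult_time_integral)
  moreover have "(\<integral>x. \<phi>\<theta> x * interpolation_flux r0 r1 x \<partial>cyl_lebesgue)
      = (\<integral>\<theta>. g \<theta> * time_integral \<phi> \<theta> \<partial>lborel)"
    unfolding integral_cyl_lebesgue[OF flux_measurable] using integral_flux_term[OF g \<phi>]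
    by (simp add: interpolation_flux_def g_def[abs_def])
  ultimately show "(\<integral>x. \<phi>t x * linear_interpolation r0 r1 x \<partial>cyl_lebesgue)
      + (\<integral>x. \<phi>\<theta> x * interpolation_flux r0 r1 x \<partial>cyl_lebesgue)
      = (\<integral>\<theta>. \<phi> (1, \<theta>) \<partial>density lborel (\<lambda>\<theta>. ennreal (r1 \<theta>)))
      - (\<integral>\<theta>. \<phi> (0, \<theta>) \<partial>density lborel (\<lambda>\<theta>. ennreal (r0 \<theta>)))"
    using nonneg by (simp add: boundary)
qed

lemma borel_measurable_cis [measurable]: "cis \<in> borel_measurable borel"
  by (intro borel_measurable_continuous_onI continuous_intros)

lemma integrable_scaleR_cis:
  assumes "integrable lborel r"
  shows "integrable lborel (\<lambda>\<theta>. r \<theta> *\<^sub>R cis \<theta>)"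
proof (rule Bochner_Integration.integrable_bound[OF assms])
  show "(\<lambda>\<theta>. r \<theta> *\<^sub>R cis \<theta>) \<in> borel_measurable lborel"
    using borel_measurable_integrable[OF assms] by (intro borel_measurable_scaleR) auto
qed (simp add: norm_cis)

lemma moment_constraint_linear_interpolation:
  fixes r0 r1 :: "real \<Rightarrow> real"
  assumes r: "integrable lborel r0" "integrable lborel r1"
    "\<And>s. s \<notin> circ \<Longrightarrow> r0 s = 0" "\<And>s. s \<notin> circ \<Longrightarrow> r1 s = 0"
    and moments: "(\<integral>\<theta>. r0 \<theta> *\<^sub>R cis \<theta> \<partial>lborel) = 0" "(\<integral>\<theta>. r1 \<theta> *\<^sub>R cis \<theta> \<partial>lborel) = 0"
  shows "moment_constraint cyl_lebesgue (linear_interpolation r0 r1)"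
  unfolding moment_constraint_def
proof
  fix A :: "real set"
  assume [measurable]: "A \<in> sets borel"
  have [measurable]: "r0 \<in> borel_measurable borel" "r1 \<in> borel_measurable borel"
    "linear_interpolation r0 r1 \<in> borel_measurable (lborel \<Otimes>\<^sub>M lborel)"
    using r(1,2) by (auto intro: borel_measurable_linear_interpolation)
  define F where "F t \<theta> = indicator cyl (t, \<theta>) *\<^sub>R
      (complex_of_real (indicator A t * linear_interpolation r0 r1 (t, \<theta>)) * cis \<theta>)" for t \<theta>
  have F_eq: "F t \<theta> = (indicator {0..1} t * indicator A t)
      *\<^sub>R ((1 - t) *\<^sub>R (r0 \<theta> *\<^sub>R cis \<theta>) + t *\<^sub>R (r1 \<theta> *\<^sub>R cis \<theta>))" for t \<theta>
    by (cases "\<theta> \<in> circ")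
      (auto simp: F_def linear_interpolation_def indicator_cyl r(3,4) scaleR_conv_of_real algebra_simps)
  have F: "integrable (lborel \<Otimes>\<^sub>M lborel) (\<lambda>(t, \<theta>). F t \<theta>)"
  proof (rule integrable_lborel_pair_bound)
    show "integrable lborel (indicator {0..1} :: real \<Rightarrow> real)"
      "integrable lborel (\<lambda>\<theta>. \<bar>r0 \<theta>\<bar> + \<bar>r1 \<theta>\<bar>)"
      using r(1,2) by auto
    show "(\<lambda>(t, \<theta>). F t \<theta>) \<in> borel_measurable (lborel \<Otimes>\<^sub>M lborel)"
      unfolding F_def by measurable
    show "norm ((\<lambda>(t, \<theta>). F t \<theta>) (t, \<theta>)) \<le> indicator {0..1} t * (\<bar>r0 \<theta>\<bar> + \<bar>r1 \<theta>\<bar>)" for t \<theta>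
      using abs_linear_interpolation_le[of t r0 r1 \<theta>]
      by (auto simp: F_def norm_mult norm_cis indicator_def cyl_def)
  qed
  have "(\<integral>\<theta>. F t \<theta> \<partial>lborel) = 0" for t
  proof -
    have "(\<integral>\<theta>. F t \<theta> \<partial>lborel) = (indicator {0..1} t * indicator A t) *\<^sub>R
        ((1 - t) *\<^sub>R (\<integral>\<theta>. r0 \<theta> *\<^sub>R cis \<theta> \<partial>lborel) + t *\<^sub>R (\<integral>\<theta>. r1 \<theta> *\<^sub>R cis \<theta> \<partial>lborel))"
      unfolding F_eq integral_scaleR_right
      by (subst Bochner_Integration.integral_add)
        (simp_all only: integral_scaleR_right integrable_scaleR_right integrable_scaleR_cis r(1,2))
    then show ?thesis
      using moments by simp
  qed
  then have "(\<integral>x. (\<lambda>(t, \<theta>). F t \<theta>) x \<partial>(lborel \<Otimes>\<^sub>M lborel)) = 0"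
    using lborel_pair.integral_fst[OF F] by simp
  then show "(\<integral>x. complex_of_real (indicator A (fst x) * linear_interpolation r0 r1 x) * cis (snd x)
      \<partial>cyl_lebesgue) = 0"
    by (subst integral_cyl_lebesgue) (simp_all add: F_def split_beta')
qed

lemma action_linear_interpolation_finite:
  fixes r0 r1 :: "real \<Rightarrow> real" and c :: real
  assumes r: "integrable lborel r0" "integrable lborel r1" and "0 < c"
    and lower: "AE \<theta> in lborel. \<theta> \<in> circ \<longrightarrow> c \<le> r0 \<theta> \<and> c \<le> r1 \<theta>"
  shows "action cyl_lebesgue (linear_interpolation r0 r1) (interpolation_flux r0 r1) < \<infinity>"
proof -
  have [measurable]: "r0 \<in> borel_measurable borel" "r1 \<in> borel_measurable borel"
    "linear_interpolation r0 r1 \<in> borel_measurable (lborel \<Otimes>\<^sub>M lborel)"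
    "interpolation_flux r0 r1 \<in> borel_measurable (lborel \<Otimes>\<^sub>M lborel)"
    using r by (auto intro: borel_measurable_linear_interpolation borel_measurable_interpolation_flux)
  have [measurable]: "(\<lambda>x. f_act (linear_interpolation r0 r1 x) (interpolation_flux r0 r1 x))
      \<in> borel_measurable (lborel \<Otimes>\<^sub>M lborel)"
    unfolding f_act_def by measurable
  define K where "K = (\<integral>s. \<bar>r1 s - r0 s\<bar> \<partial>lborel)"
  have "AE x in lborel \<Otimes>\<^sub>M lborel. snd x \<in> circ \<longrightarrow> c \<le> r0 (snd x) \<and> c \<le> r1 (snd x)"
  proof (rule lborel_pair.AE_pair_measure)
    show "{x \<in> space (lborel \<Otimes>\<^sub>M lborel). snd x \<in> circ \<longrightarrow> c \<le> r0 (snd x) \<and> c \<le> r1 (snd x)}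
        \<in> sets (lborel \<Otimes>\<^sub>M lborel)"
      by measurable
  qed (simp add: lower)
  then have "AE x in lborel \<Otimes>\<^sub>M lborel. ennreal (indicator cyl x)
      * f_act (linear_interpolation r0 r1 x) (interpolation_flux r0 r1 x)
      \<le> ennreal (K\<^sup>2 / (2 * c)) * indicator cyl x"
  proof eventually_elim
    case (elim x)
    show ?case
    proof (cases "x \<in> cyl")
      case True
      then show ?thesis
        using elim \<open>0 < c\<close> abs_interpolation_flux_le[OF r, of x] linear_interpolation_ge[of "fst x" c r0 "snd x" r1]
        by (cases x) (auto simp: cyl_def K_def intro!: f_act_le)
    qed simp
  qed
  then have "action cyl_lebesgue (linear_interpolation r0 r1) (interpolation_flux r0 r1)
      \<le> (\<integral>\<^sup>+ x. ennreal (K\<^sup>2 / (2 * c)) * indicator cyl x \<partial>(lborel \<Otimes>\<^sub>M lborel))"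
    unfolding action_def cyl_lebesgue_def by (subst nn_integral_density) (auto intro: nn_integral_mono_AE)
  also have "\<dots> = ennreal (K\<^sup>2 / (2 * c)) * emeasure (lborel \<Otimes>\<^sub>M lborel) cyl"
    by (rule nn_integral_cmult_indicator) (rule sets_lborel_pair_cyl)
  also have "\<dots> < \<infinity>"
    by (simp add: emeasure_lborel_pair_cyl ennreal_mult_less_top)
  finally show ?thesis .
qed

lemma constrained_W2_le_action:
  "admissible \<mu>0 \<mu>1 lam d v \<Longrightarrow> constrained_W2 \<mu>0 \<mu>1 \<le> action lam d v"
  unfolding constrained_W2_def by (rule INF_lower2[of "(lam, d, v)"]) auto

lemma
  fixes r :: "real \<Rightarrow> real"
  assumes "r \<in> borel_measurable borel" "AE \<theta> in lborel. 0 \<le> r \<theta>"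
  shows integral_eq_1_if_prob_space_density:
      "prob_space (density lborel (\<lambda>\<theta>. ennreal (r \<theta>))) \<Longrightarrow> (\<integral>\<theta>. r \<theta> \<partial>lborel) = 1"
    and first_moment_eq_0_if_M0plus_density:
      "M0plus (density lborel (\<lambda>\<theta>. ennreal (r \<theta>))) \<Longrightarrow> (\<integral>\<theta>. r \<theta> *\<^sub>R cis \<theta> \<partial>lborel) = 0"
proof -
  show "(\<integral>\<theta>. r \<theta> \<partial>lborel) = 1" if "prob_space (density lborel (\<lambda>\<theta>. ennreal (r \<theta>)))"
    using prob_space.prob_space[OF that] assms integral_density[of "\<lambda>_. 1::real" lborel r] by simp
  show "(\<integral>\<theta>. r \<theta> *\<^sub>R cis \<theta> \<partial>lborel) = 0" if "M0plus (density lborel (\<lambda>\<theta>. ennreal (r \<theta>)))"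
    using that assms integral_density[of cis lborel r] unfolding M0plus_def by simp
qed

theorem proposition5p5:
  fixes \<rho>0 \<rho>1 :: "real \<Rightarrow> real" and c :: real and \<mu>0 \<mu>1 :: "real measure"
  assumes "set_integrable lborel circ \<rho>0" and "set_integrable lborel circ \<rho>1"
    and "\<mu>0 = density lborel (\<lambda>\<theta>. ennreal (indicator circ \<theta> * \<rho>0 \<theta>))"
    and "\<mu>1 = density lborel (\<lambda>\<theta>. ennreal (indicator circ \<theta> * \<rho>1 \<theta>))"
    and "prob_space \<mu>0" and "prob_space \<mu>1"
    and "M0plus \<mu>0" and "M0plus \<mu>1"
    and "c > 0"
    and "AE \<theta> in lborel. \<theta> \<in> circ \<longrightarrow> \<rho>0 \<theta> \<ge> c"
    and "AE \<theta> in lborel. \<theta> \<in> circ \<longrightarrow> \<rho>1 \<theta> \<ge> c"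
  shows "constrained_W2 \<mu>0 \<mu>1 < \<infinity>"
proof -
  define r0 where "r0 \<theta> = indicator circ \<theta> * \<rho>0 \<theta>" for \<theta>
  define r1 where "r1 \<theta> = indicator circ \<theta> * \<rho>1 \<theta>" for \<theta>
  have r: "integrable lborel r0" "integrable lborel r1"
    "\<And>s. s \<notin> circ \<Longrightarrow> r0 s = 0" "\<And>s. s \<notin> circ \<Longrightarrow> r1 s = 0"
    using assms(1,2) by (simp_all add: set_integrable_def r0_def[abs_def] r1_def[abs_def])
  have \<mu>: "\<mu>0 = density lborel (\<lambda>\<theta>. ennreal (r0 \<theta>))" "\<mu>1 = density lborel (\<lambda>\<theta>. ennreal (r1 \<theta>))"
    using assms(3,4) by (simp_all add: r0_def r1_def)
  have lower: "AE \<theta> in lborel. \<theta> \<in> circ \<longrightarrow> c \<le> r0 \<theta> \<and> c \<le> r1 \<theta>"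
    using assms(10,11) by eventually_elim (simp add: r0_def r1_def)
  then have nonneg: "AE \<theta> in lborel. 0 \<le> r0 \<theta>" "AE \<theta> in lborel. 0 \<le> r1 \<theta>"
    by (eventually_elim, use \<open>c > 0\<close> in \<open>force simp: r0_def r1_def\<close>)+
  have [measurable]: "r0 \<in> borel_measurable borel" "r1 \<in> borel_measurable borel"
    using r(1,2) by auto
  have mass: "(\<integral>\<theta>. r0 \<theta> \<partial>lborel) = (\<integral>\<theta>. r1 \<theta> \<partial>lborel)"
    using assms(5,6) nonneg by (simp add: \<mu> integral_eq_1_if_prob_space_density)
  have moments: "(\<integral>\<theta>. r0 \<theta> *\<^sub>R cis \<theta> \<partial>lborel) = 0" "(\<integral>\<theta>. r1 \<theta> *\<^sub>R cis \<theta> \<partial>lborel) = 0"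
    using assms(7,8) nonneg by (simp_all add: \<mu> first_moment_eq_0_if_M0plus_density)
  have "admissible \<mu>0 \<mu>1 cyl_lebesgue (linear_interpolation r0 r1) (interpolation_flux r0 r1)"
    unfolding admissible_def \<mu>
    using reference_measure_cyl_lebesgue integrable_linear_interpolation[OF r(1,2)]
      integrable_interpolation_flux[OF r(1,2)] continuity_eq_linear_interpolation[OF r nonneg mass]
      moment_constraint_linear_interpolation[OF r moments]
    by blast
  then show ?thesis
    using action_linear_interpolation_finite[OF r(1,2) \<open>c > 0\<close> lower]
    by (rule le_less_trans[OF constrained_W2_le_action])
qed

end
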